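(* Let $y,p\in\mathbb R^2$ and $a,b>0$. For $R\in\mathbb R^{2\times2}$ and $\lambda>0$ define \[ G(R,\lambda):=p^TR^T\begin{pmatrix}\frac{\lambda+1}{a\lambda+b}&0\\0&\frac{\lambda+1}{a+b\lambda}\end{pmatrix}Ry. \] Then \[ \operatorname{cl}G(\mathrm O(2),(0,\infty))=\frac12\Big(\frac1a+\frac1b\Big)y^Tp+[-1,1]\cdot\frac12\Big|\frac1a-\frac1b\Big|\,\|y\|_2\|p\|_2. \]
   Context: $\mathrm O(2)=\{R\in\mathbb R^{2\times2}:R^TR=I_2\}$; $\operatorname{cl}$ denotes closure in $\mathbb R$; $\|\cdot\|_2$ Euclidean norm; $c+[-1,1]\cdot t$ denotes $[c-t,c+t]$. *)

theory Defs
  imports "HOL-Analysis.Analysis"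
begin

definition Dmat :: "real \<Rightarrow> real \<Rightarrow> real \<Rightarrow> real^2^2" where
  "Dmat a b lam = (\<chi> i j. if i = j then (if i = 1 then (lam + 1) / (a * lam + b)
                                           else (lam + 1) / (a + b * lam)) else 0)"

definition Gfun :: "real \<Rightarrow> real \<Rightarrow> real^2 \<Rightarrow> real^2 \<Rightarrow> real^2^2 \<Rightarrow> real \<Rightarrow> real" where
  "Gfun a b y p R lam = p \<bullet> ((transpose R ** Dmat a b lam ** R) *v y)"

end

theory Submission
  imports Defs
begin

text \<open>Put u = R p and v = R y. Then G(R,lam) = d1 u1 v1 + d2 u2 v2, where u1 v1 + u2 v2 = y.p and
  |u1 v1| + |u2 v2| <= |y| |p| because R is orthogonal, and where both diagonal entries d1, d2 are
  convex combinations of 1/a and 1/b. So G lies within |1/a - 1/b|/2 |y| |p| of the midpoint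
  (1/a + 1/b)/2 y.p. Conversely, G(R,lam) tends to u1 v1/b + u2 v2/a as lam tends to 0, and as R
  ranges over the rotations by t, u1 v1 - u2 v2 equals A cos 2t - B sin 2t, where
  A = p1 y1 - p2 y2 and B = p1 y2 + p2 y1 satisfy A^2 + B^2 = |y|^2 |p|^2; this sweeps out
  [-|y| |p|, |y| |p|], so these limits fill the interval.\<close>

lemma inner_vec2: "(u::real^2) \<bullet> v = u$1 * v$1 + u$2 * v$2"
  by (simp add: inner_vec_def sum_2)

lemma norm_vec2_power2: "(norm (u::real^2))\<^sup>2 = (u$1)\<^sup>2 + (u$2)\<^sup>2"
  by (subst power2_norm_eq_inner) (simp add: inner_vec2 power2_eq_square)

lemma sum_abs_mult_components_le_norm:
  fixes u v :: "real^'n"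
  shows "(\<Sum>i\<in>UNIV. \<bar>u$i * v$i\<bar>) \<le> norm u * norm v"
proof -
  have "(\<Sum>i\<in>UNIV. \<bar>u$i * v$i\<bar>) = (\<chi> i. \<bar>u$i\<bar>) \<bullet> (\<chi> i. \<bar>v$i\<bar>)"
    by (simp add: inner_vec_def abs_mult)
  also have "\<dots> \<le> norm (\<chi> i. \<bar>u$i\<bar>) * norm (\<chi> i. \<bar>v$i\<bar>)"
    by (rule norm_cauchy_schwarz)
  also have "\<dots> = norm u * norm v"
    by (simp add: norm_vec_def)
  finally show ?thesis .
qed

lemma orthogonal_matrix_diag_products:
  fixes R :: "real^2^2"
  assumes "orthogonal_matrix R"
  shows "(R *v u)$1 * (R *v v)$1 + (R *v u)$2 * (R *v v)$2 = u \<bullet> v"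
    and "\<bar>(R *v u)$1 * (R *v v)$1\<bar> + \<bar>(R *v u)$2 * (R *v v)$2\<bar> \<le> norm u * norm v"
proof -
  have R: "orthogonal_transformation ((*v) R)"
    using assms by (simp add: orthogonal_transformation_matrix)
  then show "(R *v u)$1 * (R *v v)$1 + (R *v u)$2 * (R *v v)$2 = u \<bullet> v"
    by (metis inner_vec2 orthogonal_transformation_def)
  show "\<bar>(R *v u)$1 * (R *v v)$1\<bar> + \<bar>(R *v u)$2 * (R *v v)$2\<bar> \<le> norm u * norm v"
    using sum_abs_mult_components_le_norm[of "R *v u" "R *v v"]
    by (simp add: sum_2 orthogonal_transformation_norm[OF R])
qed

lemma abs_convex_comb_sub_midpoint_le:
  fixes s A B :: real
  assumes "0 \<le> s" "s \<le> 1"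
  shows "\<bar>s * A + (1 - s) * B - (A + B) / 2\<bar> \<le> \<bar>A - B\<bar> / 2"
proof -
  have "s * A + (1 - s) * B - (A + B) / 2 = (s - 1/2) * (A - B)"
    by (simp add: field_simps)
  then have "\<bar>s * A + (1 - s) * B - (A + B) / 2\<bar> = \<bar>s - 1/2\<bar> * \<bar>A - B\<bar>"
    by (simp add: abs_mult)
  also have "\<dots> \<le> 1/2 * \<bar>A - B\<bar>"
  proof (rule mult_right_mono)
    show "\<bar>s - 1/2\<bar> \<le> 1/2"
      using assms by arith
  qed simp
  finally show ?thesis
    by simp
qed

lemma diag_entry_eq_convex_comb:
  fixes a b lam :: real
  assumes "a > 0" "b > 0" "lam \<ge> 0"
  shows "(lam + 1) / (a * lam + b) = b / (a * lam + b) * (1/b) + (1 - b / (a * lam + b)) * (1/a)"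
proof -
  have "a * lam + b > 0"
    using assms by (simp add: add_nonneg_pos)
  then show ?thesis
    using assms by (simp add: field_simps)
qed

lemma abs_diag_entry_sub_midpoint_le:
  fixes a b lam :: real
  assumes "a > 0" "b > 0" "lam \<ge> 0"
  shows "\<bar>(lam + 1) / (a * lam + b) - (1/a + 1/b) / 2\<bar> \<le> \<bar>1/a - 1/b\<bar> / 2"
proof -
  have "0 \<le> a * lam"
    using assms by simp
  then have "0 \<le> b / (a * lam + b)" "b / (a * lam + b) \<le> 1"
    using assms by (simp_all add: pos_divide_le_eq add_nonneg_pos)
  from abs_convex_comb_sub_midpoint_le[OF this, of "1/b" "1/a"]
  show ?thesis
    unfolding diag_entry_eq_convex_comb[OF assms] by (simp add: add.commute abs_minus_commute)
qed

lemma Gfun_eq_diag_products: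
  "Gfun a b y p R lam =
    (lam + 1) / (a * lam + b) * ((R *v p)$1 * (R *v y)$1) +
    (lam + 1) / (a + b * lam) * ((R *v p)$2 * (R *v y)$2)"
proof -
  have "Gfun a b y p R lam = p \<bullet> ((Dmat a b lam *v (R *v y)) v* R)"
    unfolding Gfun_def by (simp add: matrix_vector_mul_assoc[symmetric])
  also have "\<dots> = (R *v p) \<bullet> (Dmat a b lam *v (R *v y))"
    by (metis dot_lmul_matrix inner_commute)
  also have "\<dots> = (lam + 1) / (a * lam + b) * ((R *v p)$1 * (R *v y)$1) +
      (lam + 1) / (a + b * lam) * ((R *v p)$2 * (R *v y)$2)"
    by (simp add: inner_vec_def sum_2 matrix_vector_mult_def Dmat_def mult_ac)
  finally show ?thesis .
qed

lemma abs_Gfun_sub_midpoint_le: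
  assumes "a > 0" "b > 0" "orthogonal_matrix R" "lam \<ge> 0"
  shows "\<bar>Gfun a b y p R lam - (1/2) * (1/a + 1/b) * (y \<bullet> p)\<bar> \<le>
    (1/2) * \<bar>1/a - 1/b\<bar> * norm y * norm p"
proof -
  define x where "x = (R *v p)$1 * (R *v y)$1"
  define z where "z = (R *v p)$2 * (R *v y)$2"
  define m where "m = (1/2) * (1/a + 1/b)"
  define r where "r = (1/2) * \<bar>1/a - 1/b\<bar>"
  define d1 where "d1 = (lam + 1) / (a * lam + b)"
  define d2 where "d2 = (lam + 1) / (a + b * lam)"
  have sum_xz: "x + z = y \<bullet> p" and abs_xz: "\<bar>x\<bar> + \<bar>z\<bar> \<le> norm y * norm p"
    using orthogonal_matrix_diag_products[OF assms(3), of p y]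
    unfolding x_def z_def by (simp_all add: inner_commute mult.commute)
  have d1: "\<bar>d1 - m\<bar> \<le> r"
    using abs_diag_entry_sub_midpoint_le[of a b lam] assms unfolding d1_def m_def r_def by simp
  have "b * lam + a = a + b * lam" "1/b + 1/a = 1/a + 1/b" "\<bar>1/b - 1/a\<bar> = \<bar>1/a - 1/b\<bar>"
    by (simp_all add: add.commute abs_minus_commute)
  then have "\<bar>d2 - (1/a + 1/b) / 2\<bar> \<le> \<bar>1/a - 1/b\<bar> / 2"
    using abs_diag_entry_sub_midpoint_le[of b a lam] assms unfolding d2_def by (simp only:)
  then have d2: "\<bar>d2 - m\<bar> \<le> r"
    unfolding m_def r_def by simp
  have "Gfun a b y p R lam = d1 * x + d2 * z"
    unfolding Gfun_eq_diag_products d1_def d2_def x_def z_def ..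
  then have "\<bar>Gfun a b y p R lam - m * (y \<bullet> p)\<bar> = \<bar>(d1 - m) * x + (d2 - m) * z\<bar>"
    unfolding sum_xz[symmetric] by (simp add: algebra_simps)
  also have "\<dots> \<le> \<bar>d1 - m\<bar> * \<bar>x\<bar> + \<bar>d2 - m\<bar> * \<bar>z\<bar>"
    unfolding abs_mult[symmetric] by (rule abs_triangle_ineq)
  also have "\<dots> \<le> r * \<bar>x\<bar> + r * \<bar>z\<bar>"
    using d1 d2 by (intro add_mono mult_right_mono) simp_all
  also have "\<dots> = r * (\<bar>x\<bar> + \<bar>z\<bar>)"
    by (simp add: distrib_left)
  also have "\<dots> \<le> r * (norm y * norm p)"
    using abs_xz d1 by (simp add: mult_left_mono)
  finally show ?thesis
    by (simp only: m_def r_def mult.assoc)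
qed

lemma Gfun_zero_in_closure:
  assumes "a > 0" "b > 0" "orthogonal_matrix R"
  shows "Gfun a b y p R 0 \<in> closure {Gfun a b y p R lam | R lam. orthogonal_matrix R \<and> lam > 0}"
    (is "_ \<in> closure ?S")
proof (rule Lim_in_closed_set)
  show "((\<lambda>lam. Gfun a b y p R lam) \<longlongrightarrow> Gfun a b y p R 0) (at_right 0)"
    unfolding Gfun_eq_diag_products using assms by (intro tendsto_intros) auto
  have "Gfun a b y p R lam \<in> closure ?S" if "lam > 0" for lam
    using assms(3) that closure_subset by fastforce
  then show "\<forall>\<^sub>F lam in at_right 0. Gfun a b y p R lam \<in> closure ?S"
    by (rule eventually_mono[OF eventually_at_right_less])
qed auto

lemma Gfun_zero_eq:
  assumes "a > 0" "b > 0" "orthogonal_matrix R"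
  shows "Gfun a b y p R 0 = (1/2) * (1/a + 1/b) * (y \<bullet> p) +
    (1/b - 1/a) / 2 * ((R *v p)$1 * (R *v y)$1 - (R *v p)$2 * (R *v y)$2)"
proof -
  have "y \<bullet> p = (R *v p)$1 * (R *v y)$1 + (R *v p)$2 * (R *v y)$2"
    using orthogonal_matrix_diag_products(1)[OF assms(3), of p y] by (simp add: inner_commute)
  then show ?thesis
    unfolding Gfun_eq_diag_products using assms by (simp add: field_simps)
qed

definition rotation2 :: "real \<Rightarrow> real^2^2" where
  "rotation2 t = vector [vector [cos t, - sin t], vector [sin t, cos t]]"

lemma orthogonal_matrix_rotation2: "orthogonal_matrix (rotation2 t)"
proof -
  have "sin t * sin t + cos t * cos t = 1" "cos t * cos t + sin t * sin t = 1"
    using sin_cos_squared_add[of t] by (simp_all add: power2_eq_square)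
  then show ?thesis
    unfolding orthogonal_matrix
    by (simp add: rotation2_def vec_eq_iff forall_2 matrix_matrix_mult_def transpose_def mat_def sum_2)
qed

lemma rotation2_mult_vec:
  "(rotation2 t *v u)$1 = cos t * u$1 - sin t * u$2"
  "(rotation2 t *v u)$2 = sin t * u$1 + cos t * u$2"
  by (simp_all add: rotation2_def matrix_vector_mult_def sum_2)

lemma rotation2_diag_products_diff:
  "(rotation2 t *v u)$1 * (rotation2 t *v v)$1 - (rotation2 t *v u)$2 * (rotation2 t *v v)$2 =
    (u$1 * v$1 - u$2 * v$2) * cos (2 * t) - (u$1 * v$2 + u$2 * v$1) * sin (2 * t)"
  unfolding rotation2_mult_vec cos_double sin_double by (simp add: power2_eq_square algebra_simps)

lemma cos_sin_combination_attains:
  fixes A B w :: real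
  assumes "\<bar>w\<bar> \<le> sqrt (A\<^sup>2 + B\<^sup>2)"
  obtains s where "A * cos s - B * sin s = w"
proof (cases "A\<^sup>2 + B\<^sup>2 = 0")
  case True
  then have "A = 0" "B = 0" "w = 0"
    using assms by (simp_all add: sum_power2_eq_zero_iff)
  then show ?thesis
    using that by simp
next
  case False
  define c where "c = sqrt (A\<^sup>2 + B\<^sup>2)"
  have "0 < A\<^sup>2 + B\<^sup>2"
    by (metis False order_le_neq_trans zero_le_power2 add_nonneg_nonneg)
  then have c: "c > 0" "c\<^sup>2 = A\<^sup>2 + B\<^sup>2"
    unfolding c_def by (simp_all only: real_sqrt_gt_zero) simp
  have "(A / c)\<^sup>2 + (B / c)\<^sup>2 = (A\<^sup>2 + B\<^sup>2) / c\<^sup>2"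
    by (simp add: power_divide add_divide_distrib)
  also have "\<dots> = 1"
    using c(1) by (simp add: c(2)[symmetric])
  finally have "(A / c)\<^sup>2 + (B / c)\<^sup>2 = 1" .
  then obtain psi where psi: "A / c = cos psi" "B / c = sin psi"
    by (rule sincos_total_2pi)
  have "-1 \<le> w / c" "w / c \<le> 1"
    using assms c unfolding c_def[symmetric] by (auto simp: field_simps abs_le_iff)
  then have "cos (arccos (w / c)) = w / c"
    by simp
  moreover have "A * cos s - B * sin s = c * cos (s + psi)" for s
    using psi c by (simp add: cos_add field_simps)
  ultimately have "A * cos (arccos (w / c) - psi) - B * sin (arccos (w / c) - psi) = w"
    using c by simp
  then show ?thesis
    by (rule that)
qed

lemma orthogonal_matrix_attains_diag_products_diff:
  fixes u v :: "real^2"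
  assumes "\<bar>w\<bar> \<le> norm u * norm v"
  obtains R where "orthogonal_matrix R" "(R *v u)$1 * (R *v v)$1 - (R *v u)$2 * (R *v v)$2 = w"
proof -
  have "(u$1 * v$1 - u$2 * v$2)\<^sup>2 + (u$1 * v$2 + u$2 * v$1)\<^sup>2 = (norm u * norm v)\<^sup>2"
    unfolding power_mult_distrib norm_vec2_power2 by (simp add: power2_eq_square algebra_simps)
  then have "\<bar>w\<bar> \<le> sqrt ((u$1 * v$1 - u$2 * v$2)\<^sup>2 + (u$1 * v$2 + u$2 * v$1)\<^sup>2)"
    using assms by simp
  then obtain s where "(u$1 * v$1 - u$2 * v$2) * cos s - (u$1 * v$2 + u$2 * v$1) * sin s = w"
    by (rule cos_sin_combination_attains)
  then show ?thesis
    using that[OF orthogonal_matrix_rotation2[of "s/2"]] by (simp add: rotation2_diag_products_diff)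
qed

lemma abs_le_abs_mult_obtains_factor:
  fixes d k c :: real
  assumes "\<bar>d\<bar> \<le> \<bar>k\<bar> * c" "0 \<le> c"
  obtains w where "\<bar>w\<bar> \<le> c" "d = k * w"
proof (cases "k = 0")
  case True
  then show ?thesis
    using assms that[of 0] by simp
next
  case False
  then show ?thesis
    using assms that[of "d / k"] by (simp add: abs_divide pos_divide_le_eq mult.commute)
qed

theorem mainTheorem14:
  fixes y p :: "real^2" and a b :: real
  assumes "a > 0" and "b > 0"
  shows "closure {Gfun a b y p R lam | R lam. orthogonal_matrix R \<and> lam > 0} =
    {(1/2) * (1/a + 1/b) * (y \<bullet> p) - (1/2) * \<bar>1/a - 1/b\<bar> * norm y * norm p ..
     (1/2) * (1/a + 1/b) * (y \<bullet> p) + (1/2) * \<bar>1/a - 1/b\<bar> * norm y * norm p}"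
  (is "closure ?S = ?I")
proof
  define m where "m = (1/2) * (1/a + 1/b) * (y \<bullet> p)"
  define r where "r = (1/2) * \<bar>1/a - 1/b\<bar> * norm y * norm p"
  define k where "k = (1/b - 1/a) / 2"
  have I: "t \<in> ?I \<longleftrightarrow> \<bar>t - m\<bar> \<le> r" for t
    unfolding m_def r_def atLeastAtMost_iff abs_le_iff by linarith
  have "?S \<subseteq> ?I"
  proof
    fix g assume "g \<in> ?S"
    then obtain R lam where "orthogonal_matrix R" "lam > 0" "g = Gfun a b y p R lam"
      by blast
    then show "g \<in> ?I"
      using abs_Gfun_sub_midpoint_le[OF assms, of R lam y p] unfolding I m_def r_def by simp
  qed
  then show "closure ?S \<subseteq> ?I"
    by (rule closure_minimal) simp
  show "?I \<subseteq> closure ?S"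
  proof
    fix t assume "t \<in> ?I"
    moreover have "\<bar>k\<bar> * (norm p * norm y) = r"
      unfolding k_def r_def by (simp add: abs_minus_commute)
    ultimately have "\<bar>t - m\<bar> \<le> \<bar>k\<bar> * (norm p * norm y)"
      unfolding I by simp
    then obtain w where w: "\<bar>w\<bar> \<le> norm p * norm y" and tw: "t - m = k * w"
      by (rule abs_le_abs_mult_obtains_factor) simp
    obtain R where R: "orthogonal_matrix R"
      and Rw: "(R *v p)$1 * (R *v y)$1 - (R *v p)$2 * (R *v y)$2 = w"
      using orthogonal_matrix_attains_diag_products_diff[OF w] .
    have "Gfun a b y p R 0 = t"
      using tw unfolding m_def k_def Gfun_zero_eq[OF assms R] Rw by linarith
    then show "t \<in> closure ?S"
      using Gfun_zero_in_closure[OF assms R, where y = y and p = p] by simp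
  qed
qed

end
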